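(* Let $\bm\mu=(\mu_1,\dots,\mu_r)$ be finite positive Borel measures on the unit circle, each with infinite support, fix a square-root branch as in the context, and let $\bm n\in\mathbb N^r$. The following are equivalent: (i) there is a unique $\phi\in\operatorname{span}\{z^p\}_{p=-|\bm n|/2}^{|\bm n|/2}$ with coefficient of $z^{|\bm n|/2}$ equal to $1$ satisfying $\int\phi(z)z^{-p}\,d\mu_j(z)=0$ for $p=-n_j/2,\dots,n_j/2-1$, $j=1,\dots,r$; (ii) there is no nonzero $\phi\in\operatorname{span}\{z^p\}_{p=-|\bm n|/2}^{|\bm n|/2-1}$ satisfying these orthogonality relations; (iii) there is a unique $\psi\in\operatorname{span}\{z^p\}_{p=-|\bm n|/2}^{|\bm n|/2}$ with coefficient of $z^{-|\bm n|/2}$ equal to $1$ satisfying $\int\psi(z)z^{-p}\,d\mu_j(z)=0$ for $p=-n_j/2+1,\dots,n_j/2$, $j=1,\dots,r$; (iv) there is no nonzero $\psi\in\operatorname{span}\{z^p\}_{p=-|\bm n|/2+1}^{|\bm n|/2}$ satisfying the orthogonality relations in (iii); (v) $\det T_{\bm n}\neq0$, where $T_{\bm n}$ is the $|\bm n|\times|\bm n|$ matrix whose rows are indexed by pairs $(j,q)$, $j=1,\dots,r$, $q=n_j/2,n_j/2-1,\dots,-n_j/2+1$ (ordered by $j$, then by decreasing $q$), whose columns are indexed by $k=-|\bm n|/2,\dots,|\bm n|/2-1$, and whose $((j,q),k)$ entry is $\int z^{k}z^{q}\,d\mu_j(z)$ (with the convention $\det T_{\bm 0}=1$).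
   Context: $\partial\mathbb D=\{|z|=1\}$. Fix $t_0\in\mathbb R$ and define $z^{k/2}=|z|^{k/2}\exp(ik\arg_{[t_0,t_0+2\pi)}(z)/2)$, $k\in\mathbb Z$, with $\arg$ taking values in $[t_0,t_0+2\pi)$. For $\bm n=(n_1,\dots,n_r)$ of non-negative integers, $|\bm n|=n_1+\dots+n_r$. For integers or half-integers $a\le b$ with $b-a\in\mathbb Z$, $\operatorname{span}\{z^p\}_{p=a}^b$ is the span of $z^a,z^{a+1},\dots,z^b$ (the zero space if $a>b$). Condition (i) is the definition of $\bm n$ being "$\phi$-normal". *)

theory Defs
  imports "HOL-Probability.Probability" "Jordan_Normal_Form.Determinant"
begin

text \<open>Argument with values in the window [t0, t0 + 2 pi): shift the principal
  argument by the appropriate multiple of 2 pi.\<close>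
definition argw :: "real \<Rightarrow> complex \<Rightarrow> real" where
  "argw t0 z = Arg z - 2 * pi * of_int \<lfloor>(Arg z - t0) / (2 * pi)\<rfloor>"

text \<open>hpow t0 k z is z^(k/2) = |z|^(k/2) exp(i k arg(z) / 2), arg in [t0, t0+2pi).
  Half-integer exponents p are encoded by the integer k = 2p.\<close>
definition hpow :: "real \<Rightarrow> int \<Rightarrow> complex \<Rightarrow> complex" where
  "hpow t0 k z = complex_of_real (cmod z powr (real_of_int k / 2))
                 * exp (\<i> * complex_of_real (real_of_int k * argw t0 z / 2))"

definition msupport :: "'a::topological_space measure \<Rightarrow> 'a set" where
  "msupport M = {x \<in> space M. \<forall>U. open U \<and> x \<in> U \<longrightarrow> emeasure M (U \<inter> space M) > 0}"

text \<open>The element sum_{i=0}^{N} c_i z^{(-N+2i)/2} of span{z^p}_{p=-N/2}^{N/2}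
  (coefficient c_i belongs to z^{-N/2+i}).\<close>
definition spanfun :: "real \<Rightarrow> nat \<Rightarrow> (nat \<Rightarrow> complex) \<Rightarrow> complex \<Rightarrow> complex" where
  "spanfun t0 N c = (\<lambda>z. \<Sum>i\<le>N. c i * hpow t0 (2 * int i - int N) z)"

text \<open>Orthogonality of type (i)/(ii): int phi z^{-p} d mu_j = 0, p = -n_j/2,...,n_j/2-1
  (p = (-n_j + 2l)/2, l = 0..n_j-1).\<close>
definition orth_lo :: "real \<Rightarrow> nat \<Rightarrow> (nat \<Rightarrow> nat) \<Rightarrow> (nat \<Rightarrow> complex measure)
    \<Rightarrow> (complex \<Rightarrow> complex) \<Rightarrow> bool" where
  "orth_lo t0 r n \<mu> \<phi> \<longleftrightarrow>
     (\<forall>j<r. \<forall>l<n j. (LINT z|\<mu> j. \<phi> z * hpow t0 (int (n j) - 2 * int l) z) = 0)"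

text \<open>Orthogonality of type (iii)/(iv): p = -n_j/2+1,...,n_j/2
  (p = (-n_j + 2 + 2l)/2, l = 0..n_j-1).\<close>
definition orth_hi :: "real \<Rightarrow> nat \<Rightarrow> (nat \<Rightarrow> nat) \<Rightarrow> (nat \<Rightarrow> complex measure)
    \<Rightarrow> (complex \<Rightarrow> complex) \<Rightarrow> bool" where
  "orth_hi t0 r n \<mu> \<psi> \<longleftrightarrow>
     (\<forall>j<r. \<forall>l<n j. (LINT z|\<mu> j. \<psi> z * hpow t0 (int (n j) - 2 - 2 * int l) z) = 0)"

text \<open>Row indices (j, 2q) of T_n, ordered by j, then q = n_j/2, n_j/2-1, ..., -n_j/2+1.\<close>
definition Trows :: "nat \<Rightarrow> (nat \<Rightarrow> nat) \<Rightarrow> (nat \<times> int) list" where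
  "Trows r n = concat (map (\<lambda>j. map (\<lambda>l. (j, int (n j) - 2 * int l)) [0..<n j]) [0..<r])"

text \<open>T_n: entry ((j,q),k) = int z^k z^q d mu_j, columns k = -N/2 + b, b = 0..N-1.\<close>
definition Tmat :: "real \<Rightarrow> nat \<Rightarrow> (nat \<Rightarrow> nat) \<Rightarrow> (nat \<Rightarrow> complex measure) \<Rightarrow> complex mat" where
  "Tmat t0 r n \<mu> = (let N = (\<Sum>j<r. n j) in
     mat N N (\<lambda>(a, b). case Trows r n ! a of (j, q2) \<Rightarrow>
        LINT z|\<mu> j. hpow t0 (2 * int b - int N) z * hpow t0 q2 z))"

end

theory Submission
  imports Defs
begin

text \<open>Expanding an element of span{z^p}, p = -N/2, ..., N/2, in its N + 1 coefficients, the
  orthogonality relations of (i)/(ii), and those of (iii)/(iv), become N homogeneous linear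
  equations in N + 1 unknowns whose coefficients are moments of the measures. Deleting the
  column of the top coefficient from the first system, or of the bottom coefficient from the
  second, leaves T_n in both cases, because the relations of (iii)/(iv) are those of (i)/(ii)
  with every exponent shifted by one. For such a system a square minor is nonsingular iff no
  nonzero solution vanishes at the deleted unknown, iff the solution normalised to 1 there is
  unique.\<close>

lemma exists_mult_mat_vec_eq_if_det_nonzero:
  fixes M :: "'a :: field mat"
  assumes M: "M \<in> carrier_mat N N" and det: "det M \<noteq> 0" and b: "b \<in> carrier_vec N"
  shows "\<exists>v\<in>carrier_vec N. M *\<^sub>v v = b"
proof
  let ?v = "(1 / det M) \<cdot>\<^sub>v (adj_mat M *\<^sub>v b)"
  have adj: "adj_mat M \<in> carrier_mat N N" using adj_mat(1)[OF M] .
  show "?v \<in> carrier_vec N" using adj b by simp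
  have "M *\<^sub>v ?v = (1 / det M) \<cdot>\<^sub>v ((M * adj_mat M) *\<^sub>v b)"
    using adj b M by (simp add: mult_mat_vec)
  also have "(M * adj_mat M) *\<^sub>v b = det M \<cdot>\<^sub>v b"
    using adj_mat(2)[OF M] b by (intro eq_vecI) (auto simp: carrier_vecD)
  finally show "M *\<^sub>v ?v = b" using det b by (simp add: smult_smult_assoc)
qed

text \<open>The N by (N + 1) homogeneous system with coefficient E a i of the unknown c i in
  equation a; M is its square minor without the column of c s, whose columns h enumerates.\<close>
locale deleted_column_system =
  fixes M :: "'a :: field mat" and E :: "nat \<Rightarrow> nat \<Rightarrow> 'a" and N s :: nat and h :: "nat \<Rightarrow> nat"
  assumes carrier: "M \<in> carrier_mat N N"
    and s_le: "s \<le> N"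
    and h_bij: "bij_betw h {..<N} ({..N} - {s})"
    and entries: "\<And>a b. a < N \<Longrightarrow> b < N \<Longrightarrow> M $$ (a, b) = E a (h b)"
begin

lemma sum_eq_mult_mat_vec:
  assumes a: "a < N"
  shows "(\<Sum>i\<le>N. c i * E a i) = c s * E a s + (M *\<^sub>v vec N (\<lambda>b. c (h b))) $ a"
proof -
  have "(\<Sum>i\<le>N. c i * E a i) = c s * E a s + (\<Sum>i\<in>{..N} - {s}. c i * E a i)"
    using s_le by (simp add: sum.remove)
  also have "(\<Sum>i\<in>{..N} - {s}. c i * E a i) = (\<Sum>b<N. c (h b) * E a (h b))"
    using sum.reindex_bij_betw[OF h_bij, of "\<lambda>i. c i * E a i"] by simp
  also have "\<dots> = (M *\<^sub>v vec N (\<lambda>b. c (h b))) $ a"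
    using carrier a
    by (auto simp: scalar_prod_def entries mult.commute atLeast0LessThan intro!: sum.cong)
  finally show ?thesis .
qed

definition extend_coeffs :: "'a vec \<Rightarrow> 'a \<Rightarrow> nat \<Rightarrow> 'a" where
  "extend_coeffs v x i = (if i = s then x else if i \<le> N then v $ inv_into {..<N} h i else 0)"

lemma extend_coeffs_h: "b < N \<Longrightarrow> extend_coeffs v x (h b) = v $ b"
  using h_bij by (auto simp: extend_coeffs_def bij_betw_def inv_into_f_f)

lemma extend_coeffs_s: "extend_coeffs v x s = x"
  by (simp add: extend_coeffs_def)

lemma extend_coeffs_gt: "i > N \<Longrightarrow> extend_coeffs v x i = 0"
  using s_le by (simp add: extend_coeffs_def)

lemma vec_extend_coeffs: "v \<in> carrier_vec N \<Longrightarrow> vec N (\<lambda>b. extend_coeffs v x (h b)) = v"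
  by (auto simp: extend_coeffs_h)

lemma nontrivial_solution_iff_det_zero:
  "(\<exists>c. (\<forall>i>N. c i = 0) \<and> c s = 0 \<and> (\<exists>i. c i \<noteq> 0) \<and> (\<forall>a<N. (\<Sum>i\<le>N. c i * E a i) = 0))
     \<longleftrightarrow> det M = 0"
proof
  assume "\<exists>c. (\<forall>i>N. c i = 0) \<and> c s = 0 \<and> (\<exists>i. c i \<noteq> 0) \<and> (\<forall>a<N. (\<Sum>i\<le>N. c i * E a i) = 0)"
  then obtain c i where supp: "\<forall>i>N. c i = 0" and cs: "c s = 0" and ci: "c i \<noteq> 0"
    and sol: "\<forall>a<N. (\<Sum>i\<le>N. c i * E a i) = 0" by blast
  let ?v = "vec N (\<lambda>b. c (h b))"
  have "i \<in> h ` {..<N}"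
    using supp cs ci h_bij by (auto simp: bij_betw_def not_less[symmetric])
  then obtain b where b: "b < N" "h b = i" by auto
  then have "?v \<noteq> 0\<^sub>v N" using ci by (metis index_vec index_zero_vec(1))
  moreover have "M *\<^sub>v ?v = 0\<^sub>v N"
    using carrier sol sum_eq_mult_mat_vec[of _ c] cs by (intro eq_vecI) auto
  ultimately show "det M = 0"
    unfolding det_0_iff_vec_prod_zero[OF carrier] by (intro exI[of _ ?v]) simp
next
  assume "det M = 0"
  then obtain v where v: "v \<in> carrier_vec N" "v \<noteq> 0\<^sub>v N" and Mv: "M *\<^sub>v v = 0\<^sub>v N"
    using det_0_iff_vec_prod_zero[OF carrier] by blast
  obtain b where b: "b < N" "v $ b \<noteq> 0"
  proof (rule ccontr)
    assume "\<not> thesis"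
    with that have "v = 0\<^sub>v N" using v(1) by (intro eq_vecI) auto
    with v(2) show False ..
  qed
  let ?c = "extend_coeffs v 0"
  have "\<forall>a<N. (\<Sum>i\<le>N. ?c i * E a i) = 0"
    using sum_eq_mult_mat_vec[of _ ?c] Mv v by (simp add: vec_extend_coeffs extend_coeffs_s)
  moreover have "?c (h b) \<noteq> 0" using b by (simp add: extend_coeffs_h)
  ultimately show "\<exists>c. (\<forall>i>N. c i = 0) \<and> c s = 0 \<and> (\<exists>i. c i \<noteq> 0) \<and> (\<forall>a<N. (\<Sum>i\<le>N. c i * E a i) = 0)"
    by (intro exI[of _ ?c]) (auto simp: extend_coeffs_gt extend_coeffs_s)
qed

lemma unique_normalized_solution_iff_det_nonzero:
  "(\<exists>!c. (\<forall>i>N. c i = 0) \<and> c s = 1 \<and> (\<forall>a<N. (\<Sum>i\<le>N. c i * E a i) = 0))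
     \<longleftrightarrow> det M \<noteq> 0"
  (is "(\<exists>!c. ?P c) \<longleftrightarrow> _")
proof
  assume unique: "\<exists>!c. ?P c"
  show "det M \<noteq> 0"
  proof
    assume "det M = 0"
    then obtain d i where d: "\<forall>i>N. d i = 0" "d s = 0" "d i \<noteq> 0"
      and d_sol: "\<forall>a<N. (\<Sum>i\<le>N. d i * E a i) = 0"
      unfolding nontrivial_solution_iff_det_zero[symmetric] by blast
    from unique obtain c where c: "?P c" and c_unique: "\<forall>c'. ?P c' \<longrightarrow> c' = c"
      by (rule ex1E)
    have "?P (\<lambda>i. c i + d i)" using c d d_sol by (simp add: distrib_right sum.distrib)
    then have "(\<lambda>i. c i + d i) = c" by (rule c_unique[rule_format])
    then have "c i + d i = c i" by (rule fun_cong)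
    with d(3) show False by simp
  qed
next
  assume det: "det M \<noteq> 0"
  obtain v where v: "v \<in> carrier_vec N" "M *\<^sub>v v = vec N (\<lambda>a. - E a s)"
    using exists_mult_mat_vec_eq_if_det_nonzero[OF carrier det, of "vec N (\<lambda>a. - E a s)"] by auto
  let ?c = "extend_coeffs v 1"
  have c_sol: "?P ?c"
    using sum_eq_mult_mat_vec[of _ ?c] v
    by (simp add: vec_extend_coeffs extend_coeffs_s extend_coeffs_gt)
  moreover have "c' = ?c" if c': "?P c'" for c'
  proof (rule ccontr)
    assume "c' \<noteq> ?c"
    then obtain i where i: "c' i - ?c i \<noteq> 0" by auto
    have "\<forall>a<N. (\<Sum>i\<le>N. (c' i - ?c i) * E a i) = 0"
      using c' c_sol by (simp add: left_diff_distrib sum_subtractf)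
    then have "det M = 0"
      unfolding nontrivial_solution_iff_det_zero[symmetric] using c' c_sol i
      by (intro exI[of _ "\<lambda>i. c' i - ?c i"]) auto
    with det show False ..
  qed
  ultimately show "\<exists>!c. ?P c" by (rule ex1I)
qed

end

lemma borel_measurable_Arg [measurable]: "Arg \<in> borel_measurable borel"
proof -
  have off_zero: "(\<lambda>z. if z \<in> \<real>\<^sub>\<le>\<^sub>0 then pi else Arg z) \<in> borel_measurable borel"
    by (intro borel_measurable_continuous_on_if)
       (auto simp: continuous_on_Arg intro: borel_closed)
  have "Arg = (\<lambda>z. if z = 0 then 0 else if z \<in> \<real>\<^sub>\<le>\<^sub>0 then pi else Arg z)"
    by (auto simp: fun_eq_iff Arg_zero Arg_eq_pi complex_nonpos_Reals_iff less_le intro: complex_eqI)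
  also have "\<dots> \<in> borel_measurable borel"
    using off_zero by measurable
  finally show ?thesis .
qed

lemma borel_measurable_hpow [measurable]: "hpow t0 k \<in> borel_measurable borel"
  unfolding hpow_def[abs_def] argw_def by measurable

lemma hpow_add: "hpow t0 (a + b) z = hpow t0 a z * hpow t0 b z"
proof -
  have "cmod z powr (real_of_int (a + b) / 2)
      = cmod z powr (real_of_int a / 2) * cmod z powr (real_of_int b / 2)"
    by (simp add: powr_add[symmetric] add_divide_distrib)
  moreover have "exp (\<i> * complex_of_real (real_of_int (a + b) * argw t0 z / 2))
      = exp (\<i> * complex_of_real (real_of_int a * argw t0 z / 2))
        * exp (\<i> * complex_of_real (real_of_int b * argw t0 z / 2))"
    by (simp add: exp_add[symmetric] distrib_left distrib_right add_divide_distrib)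
  ultimately show ?thesis by (simp add: hpow_def mult_ac)
qed

lemma norm_hpow: "norm (hpow t0 k z) = cmod z powr (real_of_int k / 2)"
  by (simp add: hpow_def norm_mult)

lemma integrable_hpow:
  assumes sets: "sets M = sets (restrict_space borel (sphere (0::complex) 1))"
    and "finite_measure M"
  shows "integrable M (hpow t0 k)"
proof (rule finite_measure.integrable_const_bound[where B = 1])
  have "space M = sphere 0 1"
    using sets_eq_imp_space_eq[OF sets] by (simp add: space_restrict_space)
  then show "AE z in M. norm (hpow t0 k z) \<le> 1" by (intro AE_I2) (simp add: norm_hpow)
  show "hpow t0 k \<in> borel_measurable M"
    unfolding measurable_cong_sets[OF sets refl]
    by (rule measurable_restrict_space1[OF borel_measurable_hpow])
qed fact

lemma integral_spanfun_mult_hpow: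
  assumes "\<And>k. integrable M (hpow t0 k)"
  shows "(LINT z|M. spanfun t0 N c z * hpow t0 q z)
       = (\<Sum>i\<le>N. c i * (LINT z|M. hpow t0 (2 * int i - int N) z * hpow t0 q z))"
proof -
  have "(LINT z|M. spanfun t0 N c z * hpow t0 q z)
      = (LINT z|M. (\<Sum>i\<le>N. c i * (hpow t0 (2 * int i - int N) z * hpow t0 q z)))"
    by (simp add: spanfun_def sum_distrib_right mult.assoc)
  also have "\<dots> = (\<Sum>i\<le>N. c i * (LINT z|M. hpow t0 (2 * int i - int N) z * hpow t0 q z))"
    using assms by (simp add: hpow_add[symmetric])
  finally show ?thesis .
qed

lemma length_Trows: "length (Trows r n) = (\<Sum>j<r. n j)"
  by (simp add: Trows_def length_concat comp_def atLeast0LessThan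
      sum_set_upt_conv_sum_list_nat[symmetric])

lemma all_nth_Trows_iff:
  "(\<forall>a<(\<Sum>j<r. n j). P (Trows r n ! a)) \<longleftrightarrow> (\<forall>j<r. \<forall>l<n j. P (j, int (n j) - 2 * int l))"
proof -
  have "(\<forall>a<(\<Sum>j<r. n j). P (Trows r n ! a)) \<longleftrightarrow> (\<forall>x\<in>set (Trows r n). P x)"
    by (simp add: all_set_conv_all_nth length_Trows)
  also have "\<dots> \<longleftrightarrow> (\<forall>j<r. \<forall>l<n j. P (j, int (n j) - 2 * int l))"
    by (auto simp: Trows_def)
  finally show ?thesis .
qed

text \<open>Entry ((j, q), i) of T_n extended by one column, with the row exponent lowered by d / 2
  (exponents are doubled, as in Trows): d = 0 gives the relations of (i)/(ii), d = 2 those of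
  (iii)/(iv).\<close>
definition moment_entry ::
    "real \<Rightarrow> (nat \<Rightarrow> complex measure) \<Rightarrow> nat \<Rightarrow> int \<Rightarrow> nat \<times> int \<Rightarrow> nat \<Rightarrow> complex" where
  "moment_entry t0 \<mu> N d x i =
     (LINT z|\<mu> (fst x). hpow t0 (2 * int i - int N) z * hpow t0 (snd x - d) z)"

lemma orthogonality_iff_moment_equations:
  assumes "\<forall>j<r. \<forall>k. integrable (\<mu> j) (hpow t0 k)"
  shows "(\<forall>j<r. \<forall>l<n j. (LINT z|\<mu> j. spanfun t0 N c z * hpow t0 (int (n j) - 2 * int l - d) z) = 0)
     \<longleftrightarrow> (\<forall>a<(\<Sum>j<r. n j). (\<Sum>i\<le>N. c i * moment_entry t0 \<mu> N d (Trows r n ! a) i) = 0)"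
  unfolding all_nth_Trows_iff[where P = "\<lambda>x. (\<Sum>i\<le>N. c i * moment_entry t0 \<mu> N d x i) = 0"]
  using assms by (simp add: moment_entry_def integral_spanfun_mult_hpow)

lemma orth_lo_spanfun_iff:
  assumes "\<forall>j<r. \<forall>k. integrable (\<mu> j) (hpow t0 k)"
  shows "orth_lo t0 r n \<mu> (spanfun t0 N c)
     \<longleftrightarrow> (\<forall>a<(\<Sum>j<r. n j). (\<Sum>i\<le>N. c i * moment_entry t0 \<mu> N 0 (Trows r n ! a) i) = 0)"
  using orthogonality_iff_moment_equations[OF assms, where d = 0] by (simp add: orth_lo_def)

lemma orth_hi_spanfun_iff:
  assumes "\<forall>j<r. \<forall>k. integrable (\<mu> j) (hpow t0 k)"
  shows "orth_hi t0 r n \<mu> (spanfun t0 N c)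
     \<longleftrightarrow> (\<forall>a<(\<Sum>j<r. n j). (\<Sum>i\<le>N. c i * moment_entry t0 \<mu> N 2 (Trows r n ! a) i) = 0)"
  using orthogonality_iff_moment_equations[OF assms, where d = 2]
  by (simp add: orth_hi_def algebra_simps)

lemma Tmat_carrier: "Tmat t0 r n \<mu> \<in> carrier_mat (\<Sum>j<r. n j) (\<Sum>j<r. n j)"
  by (simp add: Tmat_def Let_def)

lemma Tmat_index:
  assumes "a < (\<Sum>j<r. n j)" "b < (\<Sum>j<r. n j)"
  shows "Tmat t0 r n \<mu> $$ (a, b) = moment_entry t0 \<mu> (\<Sum>j<r. n j) 0 (Trows r n ! a) b"
  using assms by (simp add: Tmat_def moment_entry_def split_beta)

lemma Tmat_index_shifted:
  assumes "a < (\<Sum>j<r. n j)" "b < (\<Sum>j<r. n j)"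
  shows "Tmat t0 r n \<mu> $$ (a, b) = moment_entry t0 \<mu> (\<Sum>j<r. n j) 2 (Trows r n ! a) (Suc b)"
proof -
  have "hpow t0 (2 * int (Suc b) - int N) z * hpow t0 (q - 2) z
      = hpow t0 (2 * int b - int N) z * hpow t0 q z" for N q z
    by (simp add: hpow_add[symmetric] algebra_simps)
  then show ?thesis unfolding Tmat_index[OF assms] moment_entry_def by (simp only: diff_zero)
qed

theorem proposition2p2:
  fixes \<mu> :: "nat \<Rightarrow> complex measure" and n :: "nat \<Rightarrow> nat" and r :: nat and t0 :: real
  assumes circ: "\<forall>j<r. sets (\<mu> j) = sets (restrict_space borel (sphere (0::complex) 1))"
    and fin: "\<forall>j<r. finite_measure (\<mu> j)"
    and inf_supp: "\<forall>j<r. infinite (msupport (\<mu> j))"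
  defines "N \<equiv> \<Sum>j<r. n j"
  defines "P1 \<equiv> (\<exists>!c. (\<forall>i>N. c i = 0) \<and> c N = 1 \<and> orth_lo t0 r n \<mu> (spanfun t0 N c))"
    and "P2 \<equiv> \<not> (\<exists>c. (\<forall>i\<ge>N. c i = 0) \<and> (\<exists>i. c i \<noteq> 0) \<and> orth_lo t0 r n \<mu> (spanfun t0 N c))"
    and "P3 \<equiv> (\<exists>!c. (\<forall>i>N. c i = 0) \<and> c 0 = 1 \<and> orth_hi t0 r n \<mu> (spanfun t0 N c))"
    and "P4 \<equiv> \<not> (\<exists>c. (\<forall>i>N. c i = 0) \<and> c 0 = 0 \<and> (\<exists>i. c i \<noteq> 0) \<and> orth_hi t0 r n \<mu> (spanfun t0 N c))"
    and "P5 \<equiv> det (Tmat t0 r n \<mu>) \<noteq> 0"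
  shows "(P1 \<longleftrightarrow> P2) \<and> (P2 \<longleftrightarrow> P3) \<and> (P3 \<longleftrightarrow> P4) \<and> (P4 \<longleftrightarrow> P5)"
proof -
  have integrable: "\<forall>j<r. \<forall>k. integrable (\<mu> j) (hpow t0 k)"
    using circ fin by (simp add: integrable_hpow)
  interpret lo: deleted_column_system "Tmat t0 r n \<mu>"
      "\<lambda>a. moment_entry t0 \<mu> N 0 (Trows r n ! a)" N N id
    by unfold_locales (auto simp: N_def Tmat_carrier Tmat_index bij_betw_def)
  interpret hi: deleted_column_system "Tmat t0 r n \<mu>"
      "\<lambda>a. moment_entry t0 \<mu> N 2 (Trows r n ! a)" N 0 Suc
    by unfold_locales
       (auto simp: N_def Tmat_carrier Tmat_index_shifted bij_betw_def image_Suc_lessThan)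
  note orth = orth_lo_spanfun_iff[OF integrable, where n = n, folded N_def]
    orth_hi_spanfun_iff[OF integrable, where n = n, folded N_def]
  have vanish_from_N: "(\<forall>i\<ge>N. c i = 0) \<longleftrightarrow> (\<forall>i>N. c i = 0) \<and> c N = 0" for c :: "nat \<Rightarrow> complex"
    by (auto simp: le_less)
  have "P1 \<longleftrightarrow> P5" unfolding P1_def P5_def
    by (simp only: orth lo.unique_normalized_solution_iff_det_nonzero)
  moreover have "P2 \<longleftrightarrow> P5" unfolding P2_def P5_def
    by (simp only: orth vanish_from_N conj_assoc lo.nontrivial_solution_iff_det_zero)
  moreover have "P3 \<longleftrightarrow> P5" unfolding P3_def P5_def
    by (simp only: orth hi.unique_normalized_solution_iff_det_nonzero)
  moreover have "P4 \<longleftrightarrow> P5" unfolding P4_def P5_def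
    by (simp only: orth hi.nontrivial_solution_iff_det_zero)
  ultimately show ?thesis by blast
qed

end
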